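(* Let $V(t),t\in\mathbb{Z}^d$, be a non-negative rf and $\|\cdot\|$ a norm on $\mathbb{R}^d$. Then $P(\lim_{\|t\|\to\infty}V(t)=0)=1$ if and only if there exists a non-decreasing sequence of integers $r_n\to\infty$ such that for every $\delta>0$, $$\lim_{m\to\infty}\limsup_{n\to\infty}P\Big(\max_{m\le\|t\|\le r_n}V(t)>\delta\Big)=0.$$ *)

theory Defs
  imports "HOL-Probability.Probability"
begin

text \<open>A norm on R^d (d = CARD('d)), given as an arbitrary function satisfying the norm axioms.\<close>
definition is_norm_on :: "(real ^ 'd \<Rightarrow> real) \<Rightarrow> bool" where
  "is_norm_on N \<longleftrightarrow>
     (\<forall>x. N x = 0 \<longleftrightarrow> x = 0) \<and>
     (\<forall>x y. N (x + y) \<le> N x + N y) \<and>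
     (\<forall>c x. N (c *\<^sub>R x) = \<bar>c\<bar> * N x)"

definition lat :: "int ^ 'd \<Rightarrow> real ^ 'd" where
  "lat t = (\<chi> i. real_of_int (t $ i))"

end

theory Submission
  imports Defs
begin

text \<open>
  For a non-negative field, \<open>V\<close> fails to vanish at infinity exactly when, for some \<open>\<delta> = 1/(k+1)\<close>,
  the value \<open>\<delta>\<close> is exceeded arbitrarily far out, i.e. on the intersection over \<open>m\<close> of the
  decreasing events \<open>C\<^sub>\<delta>(m)\<close> that \<open>V t > \<delta>\<close> for some \<open>t\<close> with \<open>\<parallel>t\<parallel> \<ge> m\<close>.
  So almost sure vanishing means \<open>P(C\<^sub>\<delta>(m)) \<rightarrow> 0\<close> for every \<open>\<delta> > 0\<close>, by continuity from above.
  Truncating to \<open>\<parallel>t\<parallel> \<le> r\<^sub>n\<close> only changes \<open>C\<^sub>\<delta>(m)\<close> into an increasing sequence of events with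
  union \<open>C\<^sub>\<delta>(m)\<close>, so for any non-decreasing unbounded \<open>r\<close> the \<open>lim sup\<close> over \<open>n\<close> is just \<open>P(C\<^sub>\<delta>(m))\<close>.
\<close>

definition exceedance_event ::
    "'a measure \<Rightarrow> ('i \<Rightarrow> 'a \<Rightarrow> real) \<Rightarrow> ('i \<Rightarrow> bool) \<Rightarrow> real \<Rightarrow> 'a set" where
  "exceedance_event M V P \<delta> = {\<omega> \<in> space M. \<exists>t. P t \<and> \<delta> < V t \<omega>}"

lemma sets_exceedance_event:
  fixes V :: "'i::countable \<Rightarrow> 'a \<Rightarrow> real"
  assumes "\<And>t. V t \<in> borel_measurable M"
  shows "exceedance_event M V P \<delta> \<in> sets M"
proof -
  have "exceedance_event M V P \<delta> = (\<Union>t\<in>{t. P t}. {\<omega> \<in> space M. \<delta> < V t \<omega>})"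
    by (auto simp: exceedance_event_def)
  also have "\<dots> \<in> sets M"
  proof (intro sets.countable_UN subsetI, clarify)
    show "{\<omega> \<in> space M. \<delta> < V t \<omega>} \<in> sets M" for t
      using assms[of t] by measurable
  qed
  finally show ?thesis .
qed

lemma exceedance_event_mono:
  assumes "\<And>t. P t \<Longrightarrow> Q t" and "\<delta>' \<le> \<delta>"
  shows "exceedance_event M V P \<delta> \<subseteq> exceedance_event M V Q \<delta>'"
  using assms by (force simp: exceedance_event_def)

lemma vanishing_at_infinity_iff_no_persistent_exceedance:
  fixes f :: "'i \<Rightarrow> real" and s :: "'i \<Rightarrow> real"
  assumes "\<And>t. 0 \<le> f t"
  shows "(\<forall>\<epsilon>>0. \<exists>R. \<forall>t. R < s t \<longrightarrow> \<bar>f t\<bar> < \<epsilon>) \<longleftrightarrow>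
    \<not> (\<exists>k. \<forall>m::nat. \<exists>t. real m \<le> s t \<and> 1 / real (Suc k) < f t)"
proof
  assume vanish: "\<forall>\<epsilon>>0. \<exists>R. \<forall>t. R < s t \<longrightarrow> \<bar>f t\<bar> < \<epsilon>"
  show "\<not> (\<exists>k. \<forall>m::nat. \<exists>t. real m \<le> s t \<and> 1 / real (Suc k) < f t)"
  proof
    assume "\<exists>k. \<forall>m::nat. \<exists>t. real m \<le> s t \<and> 1 / real (Suc k) < f t"
    then obtain k where k: "\<And>m::nat. \<exists>t. real m \<le> s t \<and> 1 / real (Suc k) < f t" by blast
    obtain R where R: "\<And>t. R < s t \<Longrightarrow> \<bar>f t\<bar> < 1 / real (Suc k)"
      using vanish by fastforce
    obtain m :: nat where "R < real m" using reals_Archimedean2 by blast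
    moreover obtain t where "real m \<le> s t" and "1 / real (Suc k) < f t" using k by blast
    ultimately show False using R[of t] by linarith
  qed
next
  assume no_exc: "\<not> (\<exists>k. \<forall>m::nat. \<exists>t. real m \<le> s t \<and> 1 / real (Suc k) < f t)"
  show "\<forall>\<epsilon>>0. \<exists>R. \<forall>t. R < s t \<longrightarrow> \<bar>f t\<bar> < \<epsilon>"
  proof (intro allI impI)
    fix \<epsilon> :: real assume "0 < \<epsilon>"
    then obtain k where k: "1 / real (Suc k) < \<epsilon>"
      using reals_Archimedean by (metis inverse_eq_divide)
    obtain m :: nat where "\<And>t. real m \<le> s t \<Longrightarrow> f t \<le> 1 / real (Suc k)"
      using no_exc by (force simp: not_less)
    with k assms have "\<forall>t. real m < s t \<longrightarrow> \<bar>f t\<bar> < \<epsilon>"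
      by (smt (verit))
    then show "\<exists>R. \<forall>t. R < s t \<longrightarrow> \<bar>f t\<bar> < \<epsilon>" ..
  qed
qed

lemma vanishing_event_eq_compl_persistent_exceedance:
  assumes "\<And>t \<omega>. \<omega> \<in> space M \<Longrightarrow> 0 \<le> V t \<omega>"
  shows "{\<omega> \<in> space M. \<forall>\<epsilon>>0. \<exists>R. \<forall>t. R < s t \<longrightarrow> \<bar>V t \<omega>\<bar> < \<epsilon>} =
    space M - (\<Union>k. \<Inter>m. exceedance_event M V (\<lambda>t. real m \<le> s t) (1 / real (Suc k)))"
proof -
  have "(\<forall>\<epsilon>>0. \<exists>R. \<forall>t. R < s t \<longrightarrow> \<bar>V t \<omega>\<bar> < \<epsilon>) \<longleftrightarrow>
      \<omega> \<notin> (\<Union>k. \<Inter>m. exceedance_event M V (\<lambda>t. real m \<le> s t) (1 / real (Suc k)))"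
    if "\<omega> \<in> space M" for \<omega>
    using vanishing_at_infinity_iff_no_persistent_exceedance[of "\<lambda>t. V t \<omega>" s] assms that
    by (simp add: exceedance_event_def)
  then show ?thesis
    by blast
qed

context prob_space
begin

lemma prob_INT_decseq_eq_0_iff:
  assumes "range C \<subseteq> events" and "decseq C"
  shows "prob (\<Inter>m. C m) = 0 \<longleftrightarrow> (\<lambda>m. prob (C m)) \<longlonglongrightarrow> 0"
  using finite_Lim_measure_decseq[OF assms] LIMSEQ_unique by metis

lemma prob_exceedance_event_tendsto_union:
  fixes V :: "'i::countable \<Rightarrow> 'a \<Rightarrow> real"
  assumes "\<And>t. V t \<in> borel_measurable M"
    and "\<And>n t. P n t \<Longrightarrow> P (Suc n) t" and "\<And>t. Q t \<longleftrightarrow> (\<exists>n. P n t)"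
  shows "(\<lambda>n. prob (exceedance_event M V (P n) \<delta>)) \<longlonglongrightarrow> prob (exceedance_event M V Q \<delta>)"
proof -
  have "(\<Union>n. exceedance_event M V (P n) \<delta>) = exceedance_event M V Q \<delta>"
    using assms(3) by (auto simp: exceedance_event_def)
  moreover have "incseq (\<lambda>n. exceedance_event M V (P n) \<delta>)"
    using assms(2) by (intro incseq_SucI exceedance_event_mono) auto
  ultimately show ?thesis
    using finite_Lim_measure_incseq[of "\<lambda>n. exceedance_event M V (P n) \<delta>"] assms(1)
    by (auto intro: sets_exceedance_event)
qed

lemma prob_vanishing_at_infinity_eq_1_iff:
  fixes V :: "'i::countable \<Rightarrow> 'a \<Rightarrow> real" and s :: "'i \<Rightarrow> real"
  assumes meas: "\<And>t. V t \<in> borel_measurable M"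
    and nonneg: "\<And>t \<omega>. \<omega> \<in> space M \<Longrightarrow> 0 \<le> V t \<omega>"
  shows "prob {\<omega> \<in> space M. \<forall>\<epsilon>>0. \<exists>R. \<forall>t. R < s t \<longrightarrow> \<bar>V t \<omega>\<bar> < \<epsilon>} = 1 \<longleftrightarrow>
    (\<forall>\<delta>>0. (\<lambda>m. prob (exceedance_event M V (\<lambda>t. real m \<le> s t) \<delta>)) \<longlonglongrightarrow> 0)"
proof -
  define C where "C \<delta> m = exceedance_event M V (\<lambda>t. real m \<le> s t) \<delta>" for \<delta> m
  define U where "U = (\<Union>k. \<Inter>m. C (1 / real (Suc k)) m)"
  have C_events: "C \<delta> m \<in> events" for \<delta> m
    unfolding C_def using meas by (rule sets_exceedance_event)
  have C_decseq: "decseq (C \<delta>)" for \<delta>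
    unfolding C_def by (intro decseq_SucI exceedance_event_mono) auto
  have U_events: "U \<in> events"
    unfolding U_def using C_events by blast
  have "{\<omega> \<in> space M. \<forall>\<epsilon>>0. \<exists>R. \<forall>t. R < s t \<longrightarrow> \<bar>V t \<omega>\<bar> < \<epsilon>} = space M - U"
    unfolding U_def C_def using nonneg by (rule vanishing_event_eq_compl_persistent_exceedance)
  then have "prob {\<omega> \<in> space M. \<forall>\<epsilon>>0. \<exists>R. \<forall>t. R < s t \<longrightarrow> \<bar>V t \<omega>\<bar> < \<epsilon>} = 1 \<longleftrightarrow> prob U = 0"
    using prob_compl[OF U_events] by simp
  also have "\<dots> \<longleftrightarrow> (\<forall>\<delta>>0. prob (\<Inter>m. C \<delta> m) = 0)"
  proof
    assume U_null: "prob U = 0"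
    show "\<forall>\<delta>>0. prob (\<Inter>m. C \<delta> m) = 0"
    proof (intro allI impI)
      fix \<delta> :: real assume "0 < \<delta>"
      then obtain k where k: "1 / real (Suc k) < \<delta>"
        using reals_Archimedean by (metis inverse_eq_divide)
      have "(\<Inter>m. C \<delta> m) \<subseteq> (\<Inter>m. C (1 / real (Suc k)) m)"
        unfolding C_def using k by (intro INF_mono' exceedance_event_mono) auto
      also have "\<dots> \<subseteq> U"
        unfolding U_def by blast
      finally have "prob (\<Inter>m. C \<delta> m) \<le> prob U"
        using U_events by (rule finite_measure_mono)
      with U_null show "prob (\<Inter>m. C \<delta> m) = 0"
        by (simp add: measure_le_0_iff)
    qed
  next
    assume "\<forall>\<delta>>0. prob (\<Inter>m. C \<delta> m) = 0"
    then have "(\<Inter>m. C (1 / real (Suc k)) m) \<in> null_sets M" for k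
      using C_events by (auto simp: null_sets_def emeasure_eq_measure)
    then have "U \<in> null_sets M"
      unfolding U_def by blast
    then show "prob U = 0"
      by (simp add: measure_eq_0_null_sets)
  qed
  also have "\<dots> \<longleftrightarrow> (\<forall>\<delta>>0. (\<lambda>m. prob (C \<delta> m)) \<longlonglongrightarrow> 0)"
    using prob_INT_decseq_eq_0_iff C_events C_decseq by blast
  finally show ?thesis
    unfolding C_def .
qed

lemma prob_truncated_exceedance_tendsto:
  fixes V :: "'i::countable \<Rightarrow> 'a \<Rightarrow> real" and r :: "nat \<Rightarrow> int"
  assumes "\<And>t. V t \<in> borel_measurable M"
    and "mono r" and "filterlim r at_top sequentially"
  shows "(\<lambda>n. prob (exceedance_event M V (\<lambda>t. a \<le> s t \<and> s t \<le> real_of_int (r n)) \<delta>))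
    \<longlonglongrightarrow> prob (exceedance_event M V (\<lambda>t. a \<le> s t) \<delta>)"
proof (rule prob_exceedance_event_tendsto_union[OF assms(1)])
  show "a \<le> s t \<and> s t \<le> real_of_int (r n) \<Longrightarrow> a \<le> s t \<and> s t \<le> real_of_int (r (Suc n))" for n t
    using monoD[OF assms(2), of n "Suc n"] by linarith
  show "a \<le> s t \<longleftrightarrow> (\<exists>n. a \<le> s t \<and> s t \<le> real_of_int (r n))" for t
  proof -
    have "\<forall>\<^sub>F n in sequentially. \<lceil>s t\<rceil> \<le> r n"
      using assms(3) by (simp add: filterlim_at_top)
    then obtain n where "\<lceil>s t\<rceil> \<le> r n"
      by (auto simp: eventually_sequentially)
    then have "s t \<le> real_of_int (r n)"
      by linarith
    then show ?thesis
      by blast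
  qed
qed

lemma limsup_truncated_exceedance_tendsto_0_iff:
  fixes V :: "'i::countable \<Rightarrow> 'a \<Rightarrow> real" and s :: "'i \<Rightarrow> real"
  assumes meas: "\<And>t. V t \<in> borel_measurable M"
  shows "(\<exists>r :: nat \<Rightarrow> int. mono r \<and> filterlim r at_top sequentially \<and>
      (\<forall>\<delta>>0. (\<lambda>m::nat. limsup (\<lambda>n.
          ereal (prob (exceedance_event M V (\<lambda>t. real m \<le> s t \<and> s t \<le> real_of_int (r n)) \<delta>))))
        \<longlonglongrightarrow> 0))
    \<longleftrightarrow> (\<forall>\<delta>>0. (\<lambda>m. prob (exceedance_event M V (\<lambda>t. real m \<le> s t) \<delta>)) \<longlonglongrightarrow> 0)"
    (is "(\<exists>r. mono r \<and> filterlim r at_top sequentially \<and> (\<forall>\<delta>>0. ?L r \<delta> \<longlonglongrightarrow> 0)) \<longleftrightarrow> _")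
proof -
  define C where "C \<delta> m = exceedance_event M V (\<lambda>t. real m \<le> s t) \<delta>" for \<delta> m
  have limsup_eq: "?L r \<delta> = (\<lambda>m. ereal (prob (C \<delta> m)))"
    if "mono r" and "filterlim r at_top sequentially" for r :: "nat \<Rightarrow> int" and \<delta>
    using prob_truncated_exceedance_tendsto[OF meas that]
    unfolding C_def by (intro ext lim_imp_Limsup tendsto_ereal) simp_all
  have int_unbounded: "mono int" "filterlim int at_top sequentially"
    by (auto simp: mono_def filterlim_int_sequentially)
  have "(\<exists>r. mono r \<and> filterlim r at_top sequentially \<and> (\<forall>\<delta>>0. ?L r \<delta> \<longlonglongrightarrow> 0))
      \<longleftrightarrow> (\<forall>\<delta>>0. (\<lambda>m. ereal (prob (C \<delta> m))) \<longlonglongrightarrow> 0)"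
  proof
    assume "\<exists>r. mono r \<and> filterlim r at_top sequentially \<and> (\<forall>\<delta>>0. ?L r \<delta> \<longlonglongrightarrow> 0)"
    then obtain r where "mono r" "filterlim r at_top sequentially" "\<forall>\<delta>>0. ?L r \<delta> \<longlonglongrightarrow> 0"
      by blast
    then show "\<forall>\<delta>>0. (\<lambda>m. ereal (prob (C \<delta> m))) \<longlonglongrightarrow> 0"
      using limsup_eq by simp
  next
    assume "\<forall>\<delta>>0. (\<lambda>m. ereal (prob (C \<delta> m))) \<longlonglongrightarrow> 0"
    then have "\<forall>\<delta>>0. ?L int \<delta> \<longlonglongrightarrow> 0"
      unfolding limsup_eq[OF int_unbounded] .
    with int_unbounded show "\<exists>r. mono r \<and> filterlim r at_top sequentially \<and> (\<forall>\<delta>>0. ?L r \<delta> \<longlonglongrightarrow> 0)"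
      by blast
  qed
  also have "\<dots> \<longleftrightarrow> (\<forall>\<delta>>0. (\<lambda>m. prob (C \<delta> m)) \<longlonglongrightarrow> 0)"
    by (simp add: zero_ereal_def lim_ereal)
  finally show ?thesis
    unfolding C_def .
qed

end

theorem lemmaA4:
  fixes M :: "'a measure" and V :: "int ^ 'd \<Rightarrow> 'a \<Rightarrow> real"
    and N :: "real ^ 'd \<Rightarrow> real"
  assumes "prob_space M"
    and "\<And>t. V t \<in> borel_measurable M"
    and "\<And>t \<omega>. \<omega> \<in> space M \<Longrightarrow> V t \<omega> \<ge> 0"
    and "is_norm_on N"
  shows "measure M {\<omega> \<in> space M. \<forall>\<epsilon>>0. \<exists>R. \<forall>t. N (lat t) > R \<longrightarrow> \<bar>V t \<omega>\<bar> < \<epsilon>} = 1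
    \<longleftrightarrow>
    (\<exists>r :: nat \<Rightarrow> int. mono r \<and> filterlim r at_top sequentially \<and>
      (\<forall>\<delta>>0. (\<lambda>m::nat. limsup (\<lambda>n. ereal (measure M
          {\<omega> \<in> space M. \<exists>t. real m \<le> N (lat t) \<and> N (lat t) \<le> real_of_int (r n) \<and> V t \<omega> > \<delta>})))
        \<longlonglongrightarrow> 0))"
proof -
  interpret prob_space M by fact
  show ?thesis
    using prob_vanishing_at_infinity_eq_1_iff[OF assms(2,3), where s = "\<lambda>t. N (lat t)"]
      limsup_truncated_exceedance_tendsto_0_iff[OF assms(2), where s = "\<lambda>t. N (lat t)"]
    unfolding exceedance_event_def conj_assoc by (simp only:)
qed

end
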